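(* For any deterministic eviction heuristic $h$ and any $N$ and memory budget $B \le N$, there exists an $N$-node network (computation graph) on which DTR using heuristic $h$ with budget $B$ requires $\Omega(N/B)$ times more tensor computations than an optimal static checkpointing algorithm with the same budget.
   Context: A network is a directed acyclic computation graph whose nodes are tensors; each tensor is either a constant or produced by a pure operator applied to its parent tensors. Every tensor occupies one unit of memory and every operator application costs one unit (one tensor computation). DTR (Dynamic Tensor Rematerialization) with memory budget $B$ is an online algorithm: the network's operations are presented one at a time in a given order, and DTR must perform each one when presented, without knowledge of future operations. To perform an operation, its inputs must be resident; evicted inputs are rematerialized by recursively re-executing their producing operations. When memory is full, DTR evicts the resident (evictable) tensor chosen by the heuristic; a deterministic heuristic's choice depends only on the portion of the graph revealed so far and the execution history. Tensors with no producing operation (e.g. the input) can never be evicted. A static checkpointing algorithm sees the whole graph in advance and may compute the tensors in any order consistent with dependencies, choosing which tensors to keep or recompute, subject to the same memory budget $B$; both must compute every tensor of the network. The cost of an algorithm is its total number of tensor computations, including rematerializations. *)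

theory Defs
  imports Main "HOL.Real"
begin

text \<open>Nodes are 0 ..< net_size G, presented to DTR in this (topological)
  order.\<close>

record network =
  net_size :: nat
  parents :: "nat \<Rightarrow> nat list"
  is_const :: "nat \<Rightarrow> bool"

definition wf_network :: "network \<Rightarrow> bool" where
  "wf_network G \<longleftrightarrow>
     (\<forall>i < net_size G. distinct (parents G i) \<and> (\<forall>p \<in> set (parents G i). p < i)
        \<and> (is_const G i \<longleftrightarrow> parents G i = []))"

datatype event = Compute nat | Evict nat

definition ncomputes :: "event list \<Rightarrow> nat" where
  "ncomputes H = length (filter (\<lambda>e. case e of Compute _ \<Rightarrow> True | Evict _ \<Rightarrow> False) H)"

text \<open>The portion of the graph revealed when operation n is presented.\<close>
definition revealed :: "network \<Rightarrow> nat \<Rightarrow> (nat list \<times> bool) list" where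
  "revealed G n = map (\<lambda>j. (parents G j, is_const G j)) [0..<Suc n]"

text \<open>A deterministic heuristic: its choice depends only on the revealed graph,
  the execution history, and the (history-determined) set of evictable candidates.\<close>
type_synonym heuristic = "(nat list \<times> bool) list \<Rightarrow> event list \<Rightarrow> nat set \<Rightarrow> nat"

definition valid_heuristic :: "heuristic \<Rightarrow> bool" where
  "valid_heuristic h \<longleftrightarrow> (\<forall>g H C. C \<noteq> {} \<longrightarrow> h g H C \<in> C)"

text \<open>Making room for one new tensor while operation n is being performed,
  with locked tensors L: evict heuristic choices until memory is not full.\<close>
inductive dtr_alloc :: "network \<Rightarrow> nat \<Rightarrow> heuristic \<Rightarrow> nat \<Rightarrow> nat set
    \<Rightarrow> nat set \<times> event list \<Rightarrow> nat set \<times> event list \<Rightarrow> bool"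
  for G B h where
  room: "card R < B \<Longrightarrow> dtr_alloc G B h n L (R, H) (R, H)"
| evict: "B \<le> card R \<Longrightarrow>
      e = h (revealed G n) H {x \<in> R. \<not> is_const G x \<and> x \<notin> L} \<Longrightarrow>
      e \<in> {x \<in> R. \<not> is_const G x \<and> x \<notin> L} \<Longrightarrow>
      dtr_alloc G B h n L (R - {e}, H @ [Evict e]) s' \<Longrightarrow>
      dtr_alloc G B h n L (R, H) s'"

inductive dtr_remat :: "network \<Rightarrow> nat \<Rightarrow> heuristic \<Rightarrow> nat \<Rightarrow> nat set
    \<Rightarrow> nat set \<times> event list \<Rightarrow> nat \<Rightarrow> nat set \<times> event list \<Rightarrow> bool"
  and dtr_remat_list :: "network \<Rightarrow> nat \<Rightarrow> heuristic \<Rightarrow> nat \<Rightarrow> nat set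
    \<Rightarrow> nat set \<times> event list \<Rightarrow> nat list \<Rightarrow> nat set \<times> event list \<Rightarrow> bool"
  for G B h where
  resident: "t \<in> R \<Longrightarrow> dtr_remat G B h n L (R, H) t (R, H)"
| compute: "t \<notin> R \<Longrightarrow> \<not> is_const G t \<Longrightarrow>
      dtr_remat_list G B h n (L \<union> set (parents G t)) (R, H) (parents G t) (R1, H1) \<Longrightarrow>
      dtr_alloc G B h n (L \<union> set (parents G t)) (R1, H1) (R2, H2) \<Longrightarrow>
      dtr_remat G B h n L (R, H) t (insert t R2, H2 @ [Compute t])"
| nil: "dtr_remat_list G B h n L s [] s"
| cons: "dtr_remat G B h n L s p s1 \<Longrightarrow> dtr_remat_list G B h n L s1 ps s2 \<Longrightarrow>
      dtr_remat_list G B h n L s (p # ps) s2"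

inductive dtr_step :: "network \<Rightarrow> nat \<Rightarrow> heuristic \<Rightarrow> nat
    \<Rightarrow> nat set \<times> event list \<Rightarrow> nat set \<times> event list \<Rightarrow> bool"
  for G B h where
  const: "is_const G n \<Longrightarrow> dtr_alloc G B h n {} (R, H) (R1, H1) \<Longrightarrow>
      dtr_step G B h n (R, H) (insert n R1, H1 @ [Compute n])"
| op: "\<not> is_const G n \<Longrightarrow> dtr_remat G B h n {} s n s' \<Longrightarrow> dtr_step G B h n s s'"

inductive dtr_upto :: "network \<Rightarrow> nat \<Rightarrow> heuristic \<Rightarrow> nat
    \<Rightarrow> nat set \<times> event list \<Rightarrow> bool"
  for G B h where
  start: "dtr_upto G B h 0 ({}, [])"
| next_op: "dtr_upto G B h n s \<Longrightarrow> dtr_step G B h n s s' \<Longrightarrow> dtr_upto G B h (Suc n) s'"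

definition dtr_cost :: "network \<Rightarrow> nat \<Rightarrow> heuristic \<Rightarrow> nat \<Rightarrow> bool" where
  "dtr_cost G B h k \<longleftrightarrow> (\<exists>R H. dtr_upto G B h (net_size G) (R, H) \<and> k = ncomputes H)"

fun static_ok :: "network \<Rightarrow> nat \<Rightarrow> nat set \<Rightarrow> event list \<Rightarrow> bool" where
  "static_ok G B R [] = True"
| "static_ok G B R (Compute i # s) =
     (i < net_size G \<and> i \<notin> R \<and> set (parents G i) \<subseteq> R \<and> card (insert i R) \<le> B
      \<and> static_ok G B (insert i R) s)"
| "static_ok G B R (Evict i # s) = (i \<in> R \<and> \<not> is_const G i \<and> static_ok G B (R - {i}) s)"

definition valid_static :: "network \<Rightarrow> nat \<Rightarrow> event list \<Rightarrow> bool" where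
  "valid_static G B s \<longleftrightarrow> static_ok G B {} s \<and> (\<forall>i < net_size G. Compute i \<in> set s)"

definition opt_static :: "network \<Rightarrow> nat \<Rightarrow> nat" where
  "opt_static G B = (LEAST c. \<exists>s. valid_static G B s \<and> c = ncomputes s)"

end

theory Submission
  imports Defs
begin

text \<open>The hard network consists of the input 0 feeding \<open>m = 2 B\<close> independent chains: node
  \<open>x > 0\<close> lies in lane \<open>(x - 1) mod m\<close> at stage \<open>(x - 1) div m\<close> and its parent is \<open>x - m\<close>
  (or the input, at stage 0).  Presented in index order, the operations visit the lanes
  round-robin.  A static schedule computes one lane after the other holding at most three
  tensors, so it costs \<open>N\<close>.  DTR can keep at most \<open>B - 1\<close> lanes alive, so at the start of
  every stage \<open>r\<close> at least \<open>m + 1 - B = B + 1\<close> lanes have no resident tensor, and the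
  stage-\<open>r\<close> node of such a lane can only be produced by recomputing its whole chain, at cost
  \<open>r + 1\<close>.  Summing over the \<open>N / m\<close> stages gives cost \<open>\<Omega>(N\<^sup>2 / B)\<close>.\<close>

section \<open>Executions of DTR on arbitrary networks\<close>

lemma ncomputes_simps [simp]:
  "ncomputes [] = 0"
  "ncomputes (Compute i # H) = Suc (ncomputes H)"
  "ncomputes (Evict i # H) = ncomputes H"
  "ncomputes (H @ H') = ncomputes H + ncomputes H'"
  by (simp_all add: ncomputes_def)

lemma ncomputes_concat: "ncomputes (concat Hs) = sum_list (map ncomputes Hs)"
  by (induction Hs) simp_all

lemma dtr_alloc_subset: "dtr_alloc G B h n L s s' \<Longrightarrow> fst s' \<subseteq> fst s"
  by (induction rule: dtr_alloc.induct) auto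

lemma dtr_alloc_card_less: "dtr_alloc G B h n L s s' \<Longrightarrow> card (fst s') < B"
  by (induction rule: dtr_alloc.induct) auto

lemma dtr_alloc_keeps_protected:
  "dtr_alloc G B h n L s s' \<Longrightarrow> x \<in> fst s \<Longrightarrow> is_const G x \<or> x \<in> L \<Longrightarrow> x \<in> fst s'"
  by (induction rule: dtr_alloc.induct) auto

lemma dtr_alloc_ncomputes: "dtr_alloc G B h n L s s' \<Longrightarrow> ncomputes (snd s') = ncomputes (snd s)"
  by (induction rule: dtr_alloc.induct) auto

lemma dtr_alloc_exists:
  assumes "valid_heuristic h" and "finite R" and "card {x \<in> R. is_const G x \<or> x \<in> L} < B"
  shows "\<exists>s'. dtr_alloc G B h n L (R, H) s'"
  using assms(2,3)
proof (induction "card R" arbitrary: R H rule: less_induct)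
  case less
  show ?case
  proof (cases "card R < B")
    case True
    then show ?thesis by (blast intro: dtr_alloc.room)
  next
    case False
    let ?C = "{x \<in> R. \<not> is_const G x \<and> x \<notin> L}"
    have "R = ?C \<union> {x \<in> R. is_const G x \<or> x \<in> L}" by blast
    then have "card R \<le> card ?C + card {x \<in> R. is_const G x \<or> x \<in> L}"
      by (metis card_Un_le)
    with False less.prems(2) have "card ?C \<noteq> 0" by linarith
    then have "?C \<noteq> {}" by force
    define e where "e = h (revealed G n) H ?C"
    have e: "e \<in> ?C"
      unfolding e_def using \<open>?C \<noteq> {}\<close> assms(1)
      by (simp add: valid_heuristic_def del: mem_Collect_eq)
    have "card (R - {e}) < card R"
      using e less.prems(1) by (intro card_Diff1_less) auto
    moreover have "finite (R - {e})"
      using less.prems(1) by simp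
    moreover have "card {x \<in> R - {e}. is_const G x \<or> x \<in> L} \<le> card {x \<in> R. is_const G x \<or> x \<in> L}"
      using less.prems(1) by (intro card_mono) auto
    ultimately obtain s' where "dtr_alloc G B h n L (R - {e}, H @ [Evict e]) s'"
      using less.hyps less.prems(2) by (meson le_less_trans)
    moreover have "B \<le> card R"
      using False by simp
    ultimately have "dtr_alloc G B h n L (R, H) s'"
      by (intro dtr_alloc.evict[of B R e h G n H L s', OF _ e_def e])
    then show ?thesis ..
  qed
qed

definition parent_closed :: "network \<Rightarrow> nat set \<Rightarrow> bool" where
  "parent_closed G A \<longleftrightarrow> (\<forall>x \<in> A. set (parents G x) \<subseteq> A)"

lemma dtr_remat_ncomputes_mono:
  shows "dtr_remat G B h n L s t s' \<Longrightarrow> ncomputes (snd s) \<le> ncomputes (snd s')"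
    and "dtr_remat_list G B h n L s ps s' \<Longrightarrow> ncomputes (snd s) \<le> ncomputes (snd s')"
proof (induction rule: dtr_remat_dtr_remat_list.inducts)
  case (compute t R n L H R1 H1 R2 H2)
  then show ?case
    using dtr_alloc_ncomputes[of G B h n _ "(R1, H1)" "(R2, H2)"] by simp
qed simp_all

lemma dtr_remat_card_le:
  shows "dtr_remat G B h n L s t s' \<Longrightarrow> finite (fst s) \<Longrightarrow> card (fst s) \<le> B \<Longrightarrow>
      finite (fst s') \<and> card (fst s') \<le> B"
    and "dtr_remat_list G B h n L s ps s' \<Longrightarrow> finite (fst s) \<Longrightarrow> card (fst s) \<le> B \<Longrightarrow>
      finite (fst s') \<and> card (fst s') \<le> B"
proof (induction rule: dtr_remat_dtr_remat_list.inducts)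
  case (compute t R n L H R1 H1 R2 H2)
  have "finite R1"
    using compute.IH compute.prems by simp
  moreover have "R2 \<subseteq> R1" and "card R2 < B"
    using dtr_alloc_subset[OF compute(5)] dtr_alloc_card_less[OF compute(5)] by simp_all
  ultimately have "finite R2" and "card (insert t R2) \<le> B"
    by (auto intro: finite_subset card_insert_le_m1)
  then show ?case by simp
qed auto

lemma dtr_remat_keeps_consts:
  shows "dtr_remat G B h n L s t s' \<Longrightarrow> x \<in> fst s \<Longrightarrow> is_const G x \<Longrightarrow> x \<in> fst s'"
    and "dtr_remat_list G B h n L s ps s' \<Longrightarrow> x \<in> fst s \<Longrightarrow> is_const G x \<Longrightarrow> x \<in> fst s'"
proof (induction rule: dtr_remat_dtr_remat_list.inducts)
  case (compute t R n L H R1 H1 R2 H2)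
  then show ?case
    using dtr_alloc_keeps_protected[of G B h n _ "(R1, H1)" "(R2, H2)"] by simp
qed simp_all

lemma dtr_remat_within:
  assumes "parent_closed G A"
  shows "dtr_remat G B h n L s t s' \<Longrightarrow> t \<in> A \<Longrightarrow> fst s' \<subseteq> fst s \<union> A"
    and "dtr_remat_list G B h n L s ps s' \<Longrightarrow> set ps \<subseteq> A \<Longrightarrow> fst s' \<subseteq> fst s \<union> A"
proof (induction rule: dtr_remat_dtr_remat_list.inducts)
  case (compute t R n L H R1 H1 R2 H2)
  then have "R1 \<subseteq> R \<union> A"
    using assms by (simp add: parent_closed_def)
  moreover have "R2 \<subseteq> R1"
    using compute dtr_alloc_subset by fastforce
  ultimately show ?case
    using compute by auto
qed auto

lemma dtr_remat_computes:
  assumes "dtr_remat G B h n L (R, H) t (R', H')" and "t \<notin> R"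
  shows "Suc (ncomputes H) \<le> ncomputes H'"
  using assms
proof cases
  case (compute R1 H1 R2 H2)
  then show ?thesis
    using dtr_remat_ncomputes_mono(2)[of G B h n _ "(R, H)" _ "(R1, H1)"]
      dtr_alloc_ncomputes[of G B h n _ "(R1, H1)" "(R2, H2)"] by simp
qed simp

inductive_cases dtr_remat_list_singletonE: "dtr_remat_list G B h n L s [p] s'"

lemma dtr_remat_list_singleton: "dtr_remat_list G B h n L s [p] s' \<Longrightarrow> dtr_remat G B h n L s p s'"
  by (auto elim: dtr_remat_list_singletonE dtr_remat_list.cases)

lemma dtr_step_remat: "dtr_step G B h n s s' \<Longrightarrow> \<not> is_const G n \<Longrightarrow> dtr_remat G B h n {} s n s'"
  by (cases rule: dtr_step.cases) auto

lemma parent_closed_atMost: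
  assumes "wf_network G" and "n < net_size G"
  shows "parent_closed G {..n}"
  unfolding parent_closed_def
proof (intro ballI subsetI)
  fix x p
  assume "x \<in> {..n}" and "p \<in> set (parents G x)"
  moreover have "x < net_size G"
    using \<open>x \<in> {..n}\<close> assms(2) by simp
  ultimately show "p \<in> {..n}"
    using assms(1) unfolding wf_network_def by fastforce
qed

lemma dtr_upto_invariant:
  assumes "wf_network G" and "0 < B"
  shows "dtr_upto G B h n s \<Longrightarrow> n \<le> net_size G \<Longrightarrow>
    finite (fst s) \<and> card (fst s) \<le> B \<and> fst s \<subseteq> {..<n} \<and> {x. x < n \<and> is_const G x} \<subseteq> fst s
    \<and> n \<le> ncomputes (snd s)"
proof (induction rule: dtr_upto.induct)
  case (next_op n s s')
  obtain R H where s: "s = (R, H)" by fastforce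
  with next_op have IH: "finite R" "card R \<le> B" "R \<subseteq> {..<n}" "{x. x < n \<and> is_const G x} \<subseteq> R"
      "n \<le> ncomputes H"
    by simp_all
  from next_op.hyps(2) show ?case
  proof cases
    case (const R' H' R1 H1)
    with s have alloc: "dtr_alloc G B h n {} (R, H) (R1, H1)" by simp
    have "R1 \<subseteq> R" "card R1 < B" "ncomputes H1 = ncomputes H"
      using dtr_alloc_subset[OF alloc] dtr_alloc_card_less[OF alloc] dtr_alloc_ncomputes[OF alloc]
      by simp_all
    moreover have "{x. x < Suc n \<and> is_const G x} \<subseteq> insert n R1"
      using IH(4) dtr_alloc_keeps_protected[OF alloc] by (auto simp: less_Suc_eq)
    ultimately show ?thesis
      using const IH by (auto intro: finite_subset card_insert_le_m1 less_SucI)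
  next
    case op
    obtain R' H' where s': "s' = (R', H')" by fastforce
    with op s have remat: "dtr_remat G B h n {} (R, H) n (R', H')"
      using dtr_step_remat[OF next_op.hyps(2)] by simp
    have "R' \<subseteq> R \<union> {..n}"
      using dtr_remat_within(1)[OF parent_closed_atMost remat] assms(1) next_op.prems by simp
    with IH(3) have "R' \<subseteq> {..<Suc n}"
      by fastforce
    moreover have "finite R' \<and> card R' \<le> B"
      using dtr_remat_card_le(1)[OF remat] IH by simp
    moreover have "{x. x < Suc n \<and> is_const G x} \<subseteq> R'"
      using IH(4) dtr_remat_keeps_consts(1)[OF remat] op(1) by (auto simp: less_Suc_eq)
    moreover have "Suc (ncomputes H) \<le> ncomputes H'"
      using dtr_remat_computes[OF remat] IH(3) by auto
    ultimately show ?thesis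
      using s' IH by auto
  qed
qed simp

section \<open>The chain network\<close>

definition chain_parent :: "nat \<Rightarrow> nat \<Rightarrow> nat" where
  "chain_parent m t = (if t \<le> m then 0 else t - m)"

definition chain_net :: "nat \<Rightarrow> nat \<Rightarrow> network" where
  "chain_net N m = \<lparr>net_size = N,
     parents = (\<lambda>i. if i = 0 then [] else [chain_parent m i]),
     is_const = (\<lambda>i. i = 0)\<rparr>"

lemma chain_net_simps [simp]:
  "net_size (chain_net N m) = N"
  "parents (chain_net N m) i = (if i = 0 then [] else [chain_parent m i])"
  "is_const (chain_net N m) i \<longleftrightarrow> i = 0"
  by (simp_all add: chain_net_def)

lemma chain_parent_less: "0 < m \<Longrightarrow> 0 < t \<Longrightarrow> chain_parent m t < t"
  by (simp add: chain_parent_def)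

lemma wf_chain_net: "0 < m \<Longrightarrow> wf_network (chain_net N m)"
  by (simp add: wf_network_def chain_parent_less)

definition lane :: "nat \<Rightarrow> nat \<Rightarrow> nat" where
  "lane m x = (x - 1) mod m"

definition stage :: "nat \<Rightarrow> nat \<Rightarrow> nat" where
  "stage m x = (x - 1) div m"

lemma node_eq_by_lane_stage:
  assumes "0 < x" "0 < y" "lane m x = lane m y" "stage m x = stage m y"
  shows "x = y"
proof -
  have "x - 1 = y - 1"
    using assms(3,4) unfolding lane_def stage_def by (metis div_mult_mod_eq)
  with assms(1,2) show ?thesis by simp
qed

lemma stage_eq_iff:
  assumes "0 < m" "0 < x"
  shows "stage m x = r \<longleftrightarrow> r * m < x \<and> x \<le> r * m + m"
proof
  assume "stage m x = r"
  then have "x - 1 = r * m + (x - 1) mod m"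
    unfolding stage_def using div_mult_mod_eq[of "x - 1" m] by simp
  moreover have "(x - 1) mod m < m"
    using assms(1) by simp
  ultimately show "r * m < x \<and> x \<le> r * m + m"
    using assms(2) by linarith
next
  assume "r * m < x \<and> x \<le> r * m + m"
  then show "stage m x = r"
    unfolding stage_def by (intro div_nat_eqI) (auto simp: algebra_simps)
qed

lemma chain_parent_step: "m < t \<Longrightarrow> t - 1 = (chain_parent m t - 1) + m"
  by (simp add: chain_parent_def)

lemma lane_chain_parent: "m < t \<Longrightarrow> lane m (chain_parent m t) = lane m t"
  unfolding lane_def by (simp only: chain_parent_step mod_add_self2)

lemma stage_chain_parent: "0 < m \<Longrightarrow> m < t \<Longrightarrow> Suc (stage m (chain_parent m t)) = stage m t"
  unfolding stage_def by (simp only: chain_parent_step) simp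

definition chain_below :: "nat \<Rightarrow> nat \<Rightarrow> nat set" where
  "chain_below m t = {x. 0 < x \<and> x \<le> t \<and> lane m x = lane m t}"

lemma chain_below_0 [simp]: "chain_below m 0 = {}"
  by (auto simp: chain_below_def)

lemma chain_below_self: "0 < t \<Longrightarrow> t \<in> chain_below m t"
  by (simp add: chain_below_def)

lemma chain_below_trans: "x \<in> chain_below m t \<Longrightarrow> chain_below m x \<subseteq> chain_below m t"
  by (auto simp: chain_below_def)

lemma chain_parent_mem_chain_below: "m < t \<Longrightarrow> chain_parent m t \<in> chain_below m t"
  by (auto simp: chain_below_def lane_chain_parent) (simp_all add: chain_parent_def)

lemma chain_below_chain_parent: "0 < t \<Longrightarrow> chain_below m (chain_parent m t) \<subseteq> chain_below m t"
proof (cases "m < t")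
  case True
  then show ?thesis by (intro chain_below_trans chain_parent_mem_chain_below)
next
  case False
  then show ?thesis by (simp add: chain_parent_def)
qed

lemma chain_below_disjoint:
  assumes "0 < x" "0 < y" "x \<noteq> y" "stage m x = stage m y"
  shows "chain_below m x \<inter> chain_below m y = {}"
  using assms node_eq_by_lane_stage[of x y m] by (auto simp: chain_below_def)

lemma parent_closed_chain_below: "parent_closed (chain_net N m) (insert 0 (chain_below m t))"
  unfolding parent_closed_def
proof (intro ballI subsetI)
  fix x p
  assume x: "x \<in> insert 0 (chain_below m t)" and p: "p \<in> set (parents (chain_net N m) x)"
  then have "x \<in> chain_below m t" "p = chain_parent m x"
    by (auto split: if_splits)
  then show "p \<in> insert 0 (chain_below m t)"
    using chain_parent_mem_chain_below[of m x] chain_below_trans[of x m t]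
    by (cases "m < x") (auto simp: chain_parent_def)
qed

lemma chain_remat_subset:
  assumes "dtr_remat (chain_net N m) B h n L (R, H) t (R', H')" and "0 \<in> R"
  shows "R' \<subseteq> R \<union> chain_below m t"
proof -
  have "t \<in> insert 0 (chain_below m t)"
    using chain_below_self[of t m] by (cases "t = 0") auto
  then have "R' \<subseteq> R \<union> insert 0 (chain_below m t)"
    using dtr_remat_within(1)[OF parent_closed_chain_below assms(1)] by simp
  with assms(2) show ?thesis by blast
qed

lemma chain_remat_cost:
  assumes "0 < m"
  shows "dtr_remat (chain_net N m) B h n L (R, H) t (R', H') \<Longrightarrow> 0 < t \<Longrightarrow>
    R \<inter> chain_below m t = {} \<Longrightarrow> ncomputes H + Suc (stage m t) \<le> ncomputes H'"
proof (induction t arbitrary: L R H R' H' rule: less_induct)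
  case (less t)
  have "t \<notin> R"
    using less.prems(2,3) chain_below_self[of t m] by blast
  from less.prems(1) show ?case
  proof cases
    case resident
    with \<open>t \<notin> R\<close> show ?thesis by simp
  next
    case (compute R1 H1 R2 H2)
    let ?p = "chain_parent m t"
    have alloc: "ncomputes H2 = ncomputes H1"
      using dtr_alloc_ncomputes[OF compute(6)] by simp
    show ?thesis
    proof (cases "m < t")
      case True
      have "dtr_remat (chain_net N m) B h n (L \<union> {?p}) (R, H) ?p (R1, H1)"
        using compute(5) less.prems(2) by (simp add: dtr_remat_list_singleton)
      moreover have "R \<inter> chain_below m ?p = {}"
        using less.prems(2,3) chain_below_chain_parent[of t m] by blast
      moreover have "?p < t" "0 < ?p"
        using True assms by (simp_all add: chain_parent_def)
      ultimately have "ncomputes H + Suc (stage m ?p) \<le> ncomputes H1"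
        using less.IH by blast
      then show ?thesis
        using compute(2) alloc stage_chain_parent[OF assms True] by simp
    next
      case False
      then have "stage m t = 0"
        using less.prems(2) stage_eq_iff[OF assms] by simp
      then show ?thesis
        using dtr_remat_computes[OF less.prems(1) \<open>t \<notin> R\<close>] by simp
    qed
  qed
qed

lemma chain_dtr_upto_state:
  assumes "0 < m" and "0 < B" and "dtr_upto (chain_net N m) B h n (R, H)" and "0 < n" "n \<le> N"
  shows "finite R" "card R \<le> B" "R \<subseteq> {..<n}" "0 \<in> R" "n \<le> ncomputes H"
  using dtr_upto_invariant[OF wf_chain_net[OF assms(1)] assms(2,3)] assms(4,5) by auto

lemma chain_remat_protected:
  assumes "dtr_remat (chain_net N m) B h n L' (R, H) p (R', H')" and "0 \<in> R"
    and "L \<inter> R = {}" and "\<forall>x \<in> L. p < x"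
  shows "{x \<in> R'. is_const (chain_net N m) x \<or> x \<in> insert p L} \<subseteq> {0, p}"
proof
  fix x
  assume x: "x \<in> {x \<in> R'. is_const (chain_net N m) x \<or> x \<in> insert p L}"
  show "x \<in> {0, p}"
  proof (rule ccontr)
    assume "x \<notin> {0, p}"
    with x assms(3) have "x \<in> L" "x \<notin> R"
      by auto
    with x chain_remat_subset[OF assms(1,2)] have "x \<le> p"
      by (auto simp: chain_below_def)
    with \<open>x \<in> L\<close> assms(4) show False
      by fastforce
  qed
qed

text \<open>The locked tensors all lie above \<open>t\<close>, while rematerializing \<open>t\<close> only makes nodes of
  the chain below \<open>t\<close> resident.  So when room is made for \<open>t\<close>, the only protected resident
  tensors are the input and the parent of \<open>t\<close>, and \<open>B \<ge> 3\<close> guarantees an evictable one.\<close>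

lemma chain_remat_exists:
  assumes "valid_heuristic h" and "3 \<le> B" and "0 < m"
  shows "finite R \<Longrightarrow> card R \<le> B \<Longrightarrow> 0 \<in> R \<Longrightarrow>
    (t \<notin> R \<Longrightarrow> L \<inter> R = {} \<and> (\<forall>x \<in> L. t \<le> x)) \<Longrightarrow>
    \<exists>s'. dtr_remat (chain_net N m) B h n L (R, H) t s'"
proof (induction t arbitrary: L R H rule: less_induct)
  case (less t)
  show ?case
  proof (cases "t \<in> R")
    case True
    then show ?thesis by (blast intro: dtr_remat_dtr_remat_list.resident)
  next
    case False
    let ?G = "chain_net N m" and ?p = "chain_parent m t"
    let ?L = "L \<union> set (parents ?G t)"
    have "0 < t"
      using False less.prems(3) by (cases t) auto
    then have L: "?L = insert ?p L" "L \<inter> R = {}" "\<forall>x \<in> L. t \<le> x"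
      using less.prems(4) False by auto
    have "?p < t"
      using assms(3) \<open>0 < t\<close> by (rule chain_parent_less)
    moreover have "?p \<notin> R \<Longrightarrow> ?L \<inter> R = {} \<and> (\<forall>x \<in> ?L. ?p \<le> x)"
      using L \<open>?p < t\<close> by auto
    ultimately obtain s1 where "dtr_remat ?G B h n ?L (R, H) ?p s1"
      using less.IH less.prems(1-3) by blast
    then obtain R1 H1 where remat: "dtr_remat ?G B h n ?L (R, H) ?p (R1, H1)"
      by (cases s1) blast
    have "finite R1"
      using dtr_remat_card_le(1)[OF remat] less.prems by simp
    have "{x \<in> R1. is_const ?G x \<or> x \<in> ?L} \<subseteq> {0, ?p}"
      using chain_remat_protected[OF remat less.prems(3) L(2)] L(1,3) \<open>?p < t\<close> by fastforce
    then have "card {x \<in> R1. is_const ?G x \<or> x \<in> ?L} \<le> card {0, ?p}"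
      by (intro card_mono) simp_all
    also have "\<dots> < B"
      using assms(2) by (simp add: card_insert_if)
    finally obtain s2 where "dtr_alloc ?G B h n ?L (R1, H1) s2"
      using dtr_alloc_exists[OF assms(1) \<open>finite R1\<close>] by blast
    then obtain R2 H2 where alloc: "dtr_alloc ?G B h n ?L (R1, H1) (R2, H2)"
      by (cases s2) blast
    have "dtr_remat_list ?G B h n ?L (R, H) [?p] (R1, H1)"
      by (rule dtr_remat_dtr_remat_list.cons[OF remat dtr_remat_dtr_remat_list.nil])
    then have "dtr_remat ?G B h n L (R, H) t (insert t R2, H2 @ [Compute t])"
      using False \<open>0 < t\<close> alloc by (intro dtr_remat_dtr_remat_list.compute) simp_all
    then show ?thesis ..
  qed
qed

lemma chain_dtr_upto_exists:
  assumes "valid_heuristic h" and "3 \<le> B" and "0 < m"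
  shows "n \<le> N \<Longrightarrow> \<exists>s. dtr_upto (chain_net N m) B h n s"
proof (induction n)
  case 0
  then show ?case by (blast intro: dtr_upto.start)
next
  case (Suc n)
  then obtain R H where upto: "dtr_upto (chain_net N m) B h n (R, H)"
    by fastforce
  then have inv: "finite R" "card R \<le> B" "R \<subseteq> {..<n}" "0 < n \<Longrightarrow> 0 \<in> R"
    using dtr_upto_invariant[OF wf_chain_net[OF assms(3)] _ upto] assms(2) Suc.prems by auto
  have "\<exists>s'. dtr_step (chain_net N m) B h n (R, H) s'"
  proof (cases "n = 0")
    case True
    with inv(3) have "card {x \<in> R. is_const (chain_net N m) x \<or> x \<in> {}} < B"
      using assms(2) by simp
    then obtain R1 H1 where "dtr_alloc (chain_net N m) B h n {} (R, H) (R1, H1)"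
      using dtr_alloc_exists[OF assms(1) inv(1)] by fastforce
    with True have "dtr_step (chain_net N m) B h n (R, H) (insert n R1, H1 @ [Compute n])"
      by (intro dtr_step.const) simp_all
    then show ?thesis ..
  next
    case False
    with inv(4) have "0 \<in> R"
      by simp
    then obtain s' where "dtr_remat (chain_net N m) B h n {} (R, H) n s'"
      using chain_remat_exists[OF assms inv(1,2)] by blast
    moreover have "\<not> is_const (chain_net N m) n"
      using False by simp
    ultimately have "dtr_step (chain_net N m) B h n (R, H) s'"
      by (blast intro: dtr_step.op)
    then show ?thesis ..
  qed
  with upto show ?case
    by (blast intro: dtr_upto.next_op)
qed

section \<open>The lower bound for DTR\<close>

definition pending :: "nat \<Rightarrow> nat \<Rightarrow> nat \<Rightarrow> nat set \<Rightarrow> nat set" where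
  "pending m r n R = {x. 0 < x \<and> n \<le> x \<and> stage m x = r \<and> R \<inter> chain_below m x = {}}"

lemma pending_subset_stage:
  assumes "0 < m"
  shows "pending m r n R \<subseteq> {r * m <.. r * m + m}"
proof
  fix x
  assume "x \<in> pending m r n R"
  then have "0 < x" "stage m x = r"
    by (simp_all add: pending_def)
  then show "x \<in> {r * m <.. r * m + m}"
    using stage_eq_iff[OF assms \<open>0 < x\<close>] by simp
qed

lemma finite_pending: "0 < m \<Longrightarrow> finite (pending m r n R)"
  by (rule finite_subset[OF pending_subset_stage]) simp_all

lemma card_pending_le:
  assumes "0 < m"
  shows "card (pending m r n R) \<le> m"
  using card_mono[OF finite_greaterThanAtMost pending_subset_stage[OF assms]] by simp

lemma card_stage_diff_pending_le:
  assumes "0 < m" and "finite R" and "n \<le> r * m + 1"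
  shows "card ({r * m <.. r * m + m} - pending m r n R) \<le> card (R - {0})"
proof -
  let ?S = "{r * m <.. r * m + m}"
  let ?blocked = "?S - pending m r n R"
  have stage_S: "stage m x = r" if "x \<in> ?S" for x
    using that stage_eq_iff[OF assms(1)] by simp
  have "inj_on (lane m) ?S"
  proof (rule inj_onI)
    fix x y
    assume "x \<in> ?S" "y \<in> ?S" "lane m x = lane m y"
    moreover from this have "0 < x" "0 < y"
      by simp_all
    ultimately show "x = y"
      using stage_S node_eq_by_lane_stage[of x y m] by simp
  qed
  then have "card ?blocked = card (lane m ` ?blocked)"
    by (intro card_image[symmetric] inj_on_diff)
  moreover have "lane m ` ?blocked \<subseteq> lane m ` (R - {0})"
  proof
    fix l
    assume "l \<in> lane m ` ?blocked"
    then obtain x where x: "x \<in> ?S" "x \<notin> pending m r n R" "l = lane m x"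
      by blast
    then have "R \<inter> chain_below m x \<noteq> {}"
      using assms(3) stage_S[OF x(1)] unfolding pending_def by auto
    then obtain y where "y \<in> R" "y \<in> chain_below m x"
      by blast
    then have "y \<in> R - {0}" "lane m y = l"
      using x(3) unfolding chain_below_def by auto
    then show "l \<in> lane m ` (R - {0})"
      by blast
  qed
  then have "card (lane m ` ?blocked) \<le> card (lane m ` (R - {0}))"
    using assms(2) by (intro card_mono) simp_all
  ultimately show ?thesis
    using card_image_le[of "R - {0}" "lane m"] assms(2) by simp
qed

lemma card_pending_stage_start:
  assumes "0 < m" and "finite R" and "0 \<in> R" and "n \<le> r * m + 1"
  shows "m + 1 \<le> card (pending m r n R) + card R"
proof -
  let ?S = "{r * m <.. r * m + m}"
  have "card ?S \<le> card (pending m r n R \<union> (?S - pending m r n R))"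
    using finite_pending[OF assms(1)] by (intro card_mono) auto
  also have "\<dots> \<le> card (pending m r n R) + card (?S - pending m r n R)"
    by (rule card_Un_le)
  also have "\<dots> \<le> card (pending m r n R) + card (R - {0})"
    using card_stage_diff_pending_le[OF assms(1,2,4)] by simp
  also have "\<dots> = card (pending m r n R) + card R - 1"
    using assms(2,3) card_gt_0_iff[of R] by (auto simp: card_Diff_singleton)
  finally show ?thesis
    using assms(1) by simp
qed

lemma pending_step:
  assumes "0 < n" "stage m n = r" "R' \<subseteq> R \<union> chain_below m n"
  shows "pending m r n R - {n} \<subseteq> pending m r (Suc n) R'"
proof
  fix x
  assume x: "x \<in> pending m r n R - {n}"
  then have "chain_below m n \<inter> chain_below m x = {}"
    using assms(1,2) by (intro chain_below_disjoint) (auto simp: pending_def)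
  with x assms(3) show "x \<in> pending m r (Suc n) R'"
    by (auto simp: pending_def)
qed

lemma stage_Suc:
  assumes "0 < m" "0 < n" "stage m (Suc n) \<noteq> stage m n"
  shows "Suc n = Suc (stage m n) * m + 1" and "stage m (Suc n) = Suc (stage m n)"
proof -
  let ?r = "stage m n"
  have "?r * m < n" "n \<le> ?r * m + m"
    using stage_eq_iff[OF assms(1,2), of ?r] by simp_all
  moreover have "\<not> (?r * m < Suc n \<and> Suc n \<le> ?r * m + m)"
    using assms(3) stage_eq_iff[OF assms(1), of "Suc n" ?r] by simp
  ultimately show "Suc n = Suc ?r * m + 1"
    by simp
  then show "stage m (Suc n) = Suc ?r"
    using stage_eq_iff[OF assms(1), of "Suc n"] assms(1) by simp
qed

lemma pending_eq_empty:
  assumes "0 < m" and "r * m + m < n"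
  shows "pending m r n R = {}"
proof -
  have "x \<notin> pending m r n R" for x
  proof
    assume x: "x \<in> pending m r n R"
    then have "n \<le> x"
      by (simp add: pending_def)
    moreover have "x \<le> r * m + m"
      using subsetD[OF pending_subset_stage[OF assms(1)] x] by simp
    ultimately show False
      using assms(2) by simp
  qed
  then show ?thesis
    by blast
qed

lemma chain_potential_step:
  assumes "0 < m" and "0 < n" and "0 \<in> R" and "n \<notin> R"
    and remat: "dtr_remat (chain_net N m) B h n {} (R, H) n (R', H')"
  defines "r \<equiv> stage m n"
  shows "ncomputes H + r * card (pending m r n R) + 1
    \<le> ncomputes H' + r * card (pending m r (Suc n) R')"
proof -
  have "stage m n = r"
    by (simp add: r_def)
  then have sub: "pending m r n R - {n} \<subseteq> pending m r (Suc n) R'"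
    using pending_step[OF assms(2) _ chain_remat_subset[OF remat assms(3)]] by simp
  show ?thesis
  proof (cases "R \<inter> chain_below m n = {}")
    case True
    then have "n \<in> pending m r n R"
      using assms(2) \<open>stage m n = r\<close> by (simp add: pending_def)
    then have "card (pending m r n R) \<le> card (pending m r (Suc n) R') + 1"
      using card_mono[OF finite_pending[OF assms(1)] sub] finite_pending[OF assms(1)]
      by (simp add: card_Diff_singleton)
    then have "r * card (pending m r n R) \<le> r * (card (pending m r (Suc n) R') + 1)"
      by (rule mult_le_mono2)
    moreover have "ncomputes H + Suc r \<le> ncomputes H'"
      using chain_remat_cost[OF assms(1) remat assms(2) True] \<open>stage m n = r\<close> by simp
    ultimately show ?thesis
      by (simp add: algebra_simps)
  next
    case False
    then have "pending m r n R \<subseteq> pending m r (Suc n) R'"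
      using sub by (auto simp: pending_def)
    then have "card (pending m r n R) \<le> card (pending m r (Suc n) R')"
      by (rule card_mono[OF finite_pending[OF assms(1)]])
    then have "r * card (pending m r n R) \<le> r * card (pending m r (Suc n) R')"
      by (rule mult_le_mono2)
    moreover have "Suc (ncomputes H) \<le> ncomputes H'"
      using dtr_remat_computes[OF remat assms(4)] .
    ultimately show ?thesis by linarith
  qed
qed

lemma potential_stage_start:
  assumes "0 < m" and "finite R" and "0 \<in> R" and "card R \<le> B" and "n = Suc r * m + 1"
    and "n + (m + 1 - B) * (\<Sum>i\<le>r. i) \<le> k"
  shows "n + (m + 1 - B) * (\<Sum>i\<le>Suc r. i) \<le> k + Suc r * card (pending m (Suc r) n R)"
proof -
  have "m + 1 \<le> card (pending m (Suc r) n R) + card R"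
    using card_pending_stage_start[OF assms(1-3)] assms(5) by simp
  then have "Suc r * (m + 1 - B) \<le> Suc r * card (pending m (Suc r) n R)"
    using assms(4) by (intro mult_le_mono2) linarith
  moreover have "(m + 1 - B) * (\<Sum>i\<le>Suc r. i) = (m + 1 - B) * (\<Sum>i\<le>r. i) + Suc r * (m + 1 - B)"
    by (simp add: add_mult_distrib2)
  ultimately show ?thesis
    using assms(6) by linarith
qed

text \<open>A pending node of the current stage \<open>r\<close> still costs
  \<open>r + 1\<close> computations when it is presented, \<open>r\<close> of which are prepaid by the potential
  \<open>r * card (pending \<dots>)\<close>; each new stage starts with at least \<open>m + 1 - B\<close> pending nodes.\<close>

lemma chain_dtr_upto_potential:
  assumes "0 < m" and "0 < B"
  shows "dtr_upto (chain_net N m) B h n s \<Longrightarrow> n \<le> N \<Longrightarrow> 0 < n \<Longrightarrow>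
    n + (m + 1 - B) * (\<Sum>i\<le>stage m n. i)
      \<le> ncomputes (snd s) + stage m n * card (pending m (stage m n) n (fst s))"
proof (induction rule: dtr_upto.induct)
  case (next_op n s s')
  obtain R H R' H' where s: "s = (R, H)" and s': "s' = (R', H')"
    by fastforce
  have upto': "dtr_upto (chain_net N m) B h (Suc n) (R', H')"
    using dtr_upto.next_op[OF next_op.hyps] s' by simp
  have inv': "finite R'" "card R' \<le> B" "0 \<in> R'" "Suc n \<le> ncomputes H'"
    using chain_dtr_upto_state[OF assms upto'] next_op.prems(1) by simp_all
  show ?case
  proof (cases "n = 0")
    case True
    then show ?thesis
      using inv' s' by (simp add: stage_def)
  next
    case False
    define r where "r = stage m n"
    have inv: "R \<subseteq> {..<n}" "0 \<in> R"
      using chain_dtr_upto_state[OF assms, of N h n R H] next_op s False by simp_all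
    have remat: "dtr_remat (chain_net N m) B h n {} (R, H) n (R', H')"
      using dtr_step_remat[OF next_op.hyps(2)] s s' False by simp
    have IH: "n + (m + 1 - B) * (\<Sum>i\<le>r. i) \<le> ncomputes H + r * card (pending m r n R)"
      using next_op.IH next_op.prems(1) False s by (simp add: r_def)
    have step: "ncomputes H + r * card (pending m r n R) + 1
        \<le> ncomputes H' + r * card (pending m r (Suc n) R')"
      unfolding r_def using chain_potential_step[OF assms(1) _ inv(2) _ remat] False inv(1) by auto
    show ?thesis
    proof (cases "stage m (Suc n) = r")
      case True
      with IH step s' show ?thesis by simp
    next
      case False
      then have Suc_n: "Suc n = Suc r * m + 1" "stage m (Suc n) = Suc r"
        using stage_Suc[OF assms(1)] \<open>n \<noteq> 0\<close> r_def by auto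
      have "pending m r (Suc n) R' = {}"
        using Suc_n(1) by (intro pending_eq_empty assms(1)) simp
      then have "Suc n + (m + 1 - B) * (\<Sum>i\<le>r. i) \<le> ncomputes H'"
        using IH step by simp
      then show ?thesis
        using potential_stage_start[OF assms(1) inv'(1,3,2) Suc_n(1)] s' Suc_n(2) by simp
    qed
  qed
qed simp

section \<open>A static schedule of linear cost\<close>

function arith_prog :: "nat \<Rightarrow> nat \<Rightarrow> nat \<Rightarrow> nat list" where
  "arith_prog j m N = (if j < N \<and> 0 < m then j # arith_prog (j + m) m N else [])"
  by auto
termination by (relation "measure (\<lambda>(j, m, N). N - j)") auto

declare arith_prog.simps [simp del]

lemma set_arith_prog: "0 < m \<Longrightarrow> set (arith_prog j m N) = {x. x < N \<and> (\<exists>q. x = j + q * m)}"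
proof (induction j m N rule: arith_prog.induct)
  case (1 j m N)
  show ?case
  proof (cases "j < N")
    case True
    have "{x. x < N \<and> (\<exists>q. x = j + q * m)} = insert j {x. x < N \<and> (\<exists>q. x = j + m + q * m)}"
    proof (intro set_eqI iffI)
      fix x
      assume "x \<in> {x. x < N \<and> (\<exists>q. x = j + q * m)}"
      then obtain q where "x < N" "x = j + q * m"
        by blast
      then show "x \<in> insert j {x. x < N \<and> (\<exists>q. x = j + m + q * m)}"
        by (cases q) auto
    next
      fix x
      assume "x \<in> insert j {x. x < N \<and> (\<exists>q. x = j + m + q * m)}"
      then show "x \<in> {x. x < N \<and> (\<exists>q. x = j + q * m)}"
        using True by (auto intro: exI[of _ 0] exI[of _ "Suc _"])
    qed
    with 1 True show ?thesis
      by (subst arith_prog.simps) simp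
  next
    case False
    then show ?thesis
      by (subst arith_prog.simps) auto
  qed
qed

lemma hd_arith_prog: "arith_prog j m N \<noteq> [] \<Longrightarrow> hd (arith_prog j m N) = j"
  by (subst (asm) arith_prog.simps, subst arith_prog.simps) (auto split: if_splits)

lemma successively_arith_prog: "successively (\<lambda>x y. y = x + m) (arith_prog j m N)"
proof (induction j m N rule: arith_prog.induct)
  case (1 j m N)
  then show ?case
    by (subst arith_prog.simps) (auto simp: successively_Cons arith_prog.simps[of "j + m"])
qed

lemma distinct_arith_prog: "0 < m \<Longrightarrow> distinct (arith_prog j m N)"
proof (induction j m N rule: arith_prog.induct)
  case (1 j m N)
  then show ?case
    by (subst arith_prog.simps) (auto simp: set_arith_prog)
qed

fun walk_from :: "nat \<Rightarrow> nat list \<Rightarrow> event list" where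
  "walk_from x [] = [Evict x]"
| "walk_from x (y # ys) = Compute y # Evict x # walk_from y ys"

definition walk :: "nat list \<Rightarrow> event list" where
  "walk xs = (case xs of [] \<Rightarrow> [] | x # ys \<Rightarrow> Compute x # walk_from x ys)"

lemma ncomputes_walk: "ncomputes (walk xs) = length xs"
proof -
  have "ncomputes (walk_from x ys) = length ys" for x ys
    by (induction x ys rule: walk_from.induct) simp_all
  then show ?thesis
    by (simp add: walk_def split: list.split)
qed

lemma Compute_in_walk: "Compute z \<in> set (walk xs) \<longleftrightarrow> z \<in> set xs"
proof -
  have "Compute z \<in> set (walk_from x ys) \<longleftrightarrow> z \<in> set ys" for x ys
    by (induction x ys rule: walk_from.induct) auto
  then show ?thesis
    by (cases xs) (simp_all add: walk_def)
qed

lemma static_ok_walk_from: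
  assumes "wf_network G" and "finite R" and "card R + 2 \<le> B" and "static_ok G B R rest"
  shows "successively (\<lambda>a b. parents G b = [a]) (x # ys) \<Longrightarrow>
    \<forall>y \<in> set (x # ys). y < net_size G \<and> y \<notin> R \<and> \<not> is_const G y \<Longrightarrow>
    static_ok G B (insert x R) (walk_from x ys @ rest)"
proof (induction ys arbitrary: x)
  case Nil
  then show ?case
    using assms(4) by simp
next
  case (Cons y ys)
  then have "parents G y = [x]" "y < net_size G"
    by simp_all
  then have "x < y"
    using assms(1) unfolding wf_network_def by fastforce
  moreover have "card (insert y (insert x R)) \<le> B"
    using assms(2,3) by (simp add: card_insert_if)
  moreover have "static_ok G B (insert y R) (walk_from y ys @ rest)"
    using Cons by simp
  moreover have "insert y (insert x R) - {x} = insert y R"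
    using Cons.prems(2) \<open>x < y\<close> by auto
  ultimately show ?case
    using Cons.prems by simp
qed

lemma static_ok_walk:
  assumes "wf_network G" and "finite R" and "card R + 2 \<le> B" and "static_ok G B R rest"
    and "successively (\<lambda>a b. parents G b = [a]) xs"
    and "\<forall>y \<in> set xs. y < net_size G \<and> y \<notin> R \<and> \<not> is_const G y"
    and "xs \<noteq> [] \<Longrightarrow> set (parents G (hd xs)) \<subseteq> R"
  shows "static_ok G B R (walk xs @ rest)"
proof (cases xs)
  case Nil
  with assms(4) show ?thesis
    by (simp add: walk_def)
next
  case (Cons x ys)
  have "card (insert x R) \<le> B"
    using assms(2,3) by (simp add: card_insert_if)
  moreover have "static_ok G B (insert x R) (walk_from x ys @ rest)"
    using static_ok_walk_from[OF assms(1-4)] assms(5,6) Cons by simp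
  ultimately show ?thesis
    using assms(6,7) Cons by (simp add: walk_def)
qed

lemma static_ok_concat:
  assumes "\<And>xs rest. xs \<in> set xss \<Longrightarrow> static_ok G B R rest \<Longrightarrow> static_ok G B R (xs @ rest)"
  shows "static_ok G B R (concat xss)"
  using assms
proof (induction xss)
  case (Cons xs xss)
  then have "static_ok G B R (concat xss)"
    by simp
  then show ?case
    using Cons.prems[of xs "concat xss"] by simp
qed simp

lemma mem_arith_prog_iff_lane:
  assumes "l < m"
  shows "x \<in> set (arith_prog (Suc l) m N) \<longleftrightarrow> 0 < x \<and> x < N \<and> lane m x = l"
proof
  assume "x \<in> set (arith_prog (Suc l) m N)"
  then obtain q where "x < N" "x = Suc l + q * m"
    using set_arith_prog assms by fastforce
  with assms show "0 < x \<and> x < N \<and> lane m x = l"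
    by (simp add: lane_def)
next
  assume x: "0 < x \<and> x < N \<and> lane m x = l"
  then have "x = Suc l + stage m x * m"
    using div_mult_mod_eq[of "x - 1" m] unfolding lane_def stage_def by arith
  with x assms show "x \<in> set (arith_prog (Suc l) m N)"
    by (auto simp: set_arith_prog)
qed

definition chain_schedule :: "nat \<Rightarrow> nat \<Rightarrow> event list" where
  "chain_schedule N m = Compute 0 # concat (map (\<lambda>l. walk (arith_prog (Suc l) m N)) [0..<m])"

lemma successively_parents_arith_prog:
  assumes "l < m"
  shows "successively (\<lambda>a b. parents (chain_net N m) b = [a]) (arith_prog (Suc l) m N)"
  using successively_arith_prog
proof (rule successively_mono)
  fix x y
  assume "x \<in> set (arith_prog (Suc l) m N)" and "y = x + m"
  then show "parents (chain_net N m) y = [x]"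
    using mem_arith_prog_iff_lane[OF assms] by (auto simp: chain_parent_def)
qed

lemma valid_chain_schedule:
  assumes "0 < m" and "3 \<le> B" and "0 < N"
  shows "valid_static (chain_net N m) B (chain_schedule N m)"
proof -
  have "static_ok (chain_net N m) B {0} (concat (map (\<lambda>l. walk (arith_prog (Suc l) m N)) [0..<m]))"
  proof (rule static_ok_concat)
    fix xs rest
    assume "xs \<in> set (map (\<lambda>l. walk (arith_prog (Suc l) m N)) [0..<m])"
      and rest: "static_ok (chain_net N m) B {0} rest"
    then obtain l where l: "l < m" "xs = walk (arith_prog (Suc l) m N)"
      by auto
    show "static_ok (chain_net N m) B {0} (xs @ rest)"
      unfolding l(2)
      using wf_chain_net[OF assms(1)] assms(2) rest successively_parents_arith_prog[OF l(1)]
        hd_arith_prog[of "Suc l" m N] l(1)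
      by (intro static_ok_walk) (auto simp: mem_arith_prog_iff_lane chain_parent_def)
  qed
  moreover have "Compute i \<in> set (chain_schedule N m)" if "i < N" for i
  proof (cases "i = 0")
    case False
    with that assms(1) have "i \<in> set (arith_prog (Suc (lane m i)) m N)" "lane m i < m"
      by (simp_all add: mem_arith_prog_iff_lane lane_def)
    then show ?thesis
      unfolding chain_schedule_def by (force simp: Compute_in_walk)
  qed (simp add: chain_schedule_def)
  ultimately show ?thesis
    using assms by (simp add: valid_static_def chain_schedule_def)
qed

lemma ncomputes_chain_schedule:
  assumes "0 < m" and "0 < N"
  shows "ncomputes (chain_schedule N m) \<le> N"
proof -
  let ?order = "concat (map (\<lambda>l. arith_prog (Suc l) m N) [0..<m])"
  have "ncomputes (chain_schedule N m) = Suc (length ?order)"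
    by (simp add: chain_schedule_def ncomputes_concat length_concat ncomputes_walk o_def)
  moreover have distinct: "distinct (concat (map (\<lambda>l. arith_prog (Suc l) m N) [0..<k]))"
    if "k \<le> m" for k
    using that
  proof (induction k)
    case (Suc k)
    then show ?case
      using distinct_arith_prog[OF assms(1)] mem_arith_prog_iff_lane by fastforce
  qed simp
  then have "card (set ?order) = length ?order"
    using distinct[of m] by (intro distinct_card) simp
  moreover have "set ?order \<subseteq> {1..<N}"
    using mem_arith_prog_iff_lane by auto
  then have "card (set ?order) \<le> card {1..<N}"
    by (intro card_mono) simp_all
  ultimately show ?thesis
    using assms(2) by simp
qed

lemma opt_static_chain_net_le:
  assumes "0 < m" and "3 \<le> B" and "0 < N"
  shows "opt_static (chain_net N m) B \<le> N"
proof -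
  have "opt_static (chain_net N m) B \<le> ncomputes (chain_schedule N m)"
    unfolding opt_static_def using valid_chain_schedule[OF assms] by (intro Least_le) blast
  also have "\<dots> \<le> N"
    using ncomputes_chain_schedule[OF assms(1,3)] .
  finally show ?thesis .
qed

section \<open>The competitive ratio\<close>

text \<open>The potential gives \<open>B r (r + 1) \<le> 4 k\<close> and the stage bounds give \<open>2 B r < N \<le> k\<close>;
  hence \<open>N\<^sup>2 \<le> 4 B (B r (r + 1) + B r + B) \<le> 22 B k\<close>.\<close>

lemma quadratic_cost_bound:
  fixes N k B r P :: nat
  assumes "N \<le> k" and "B \<le> N" and "P \<le> 2 * B"
    and potential: "N + (B + 1) * (\<Sum>i\<le>r. i) \<le> k + r * P"
    and stage: "r * (2 * B) < N" "N \<le> r * (2 * B) + 2 * B"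
  shows "N * N \<le> 22 * B * k"
proof -
  have gauss: "2 * (\<Sum>i\<le>r. i) = r * (r + 1)"
    by (induction r) simp_all
  have "B * (\<Sum>i\<le>r. i) \<le> (B + 1) * (\<Sum>i\<le>r. i)"
    by simp
  moreover have "r * P \<le> r * (2 * B)"
    using assms(3) by (rule mult_le_mono2)
  ultimately have "B * (\<Sum>i\<le>r. i) \<le> k + r * (2 * B)"
    using potential by linarith
  then have "2 * (B * (\<Sum>i\<le>r. i)) \<le> 4 * k"
    using assms(1) stage(1) by linarith
  then have X: "B * (r * (r + 1)) \<le> 4 * k"
    by (simp only: gauss mult.left_commute[of 2 B])
  have Y: "2 * (B * r) \<le> k"
    using assms(1) stage(1) by (simp add: algebra_simps)
  define Z where "Z = B * (r * (r + 1)) + B * r + B"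
  have "N * N \<le> (2 * B * (r + 1)) * (2 * B * (r + 1))"
    using stage(2) by (intro mult_le_mono) (simp_all add: algebra_simps)
  also have "\<dots> = 4 * (B * Z)"
    by (simp add: Z_def algebra_simps)
  finally have "N * N \<le> 4 * (B * Z)" .
  moreover have "2 * Z \<le> 11 * k"
    using X Y assms(1,2) unfolding Z_def by simp
  then have "B * (2 * Z) \<le> B * (11 * k)"
    by (rule mult_le_mono2)
  then have "2 * (B * Z) \<le> 11 * (B * k)"
    by (simp only: mult.left_commute)
  ultimately have "N * N \<le> 22 * (B * k)"
    by linarith
  then show ?thesis
    by (simp only: mult.assoc)
qed

lemma chain_dtr_cost_lower_bound:
  assumes "0 < B" and "B \<le> N" and "dtr_cost (chain_net N (2 * B)) B h k"
  shows "N * N \<le> 22 * B * k"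
proof -
  let ?G = "chain_net N (2 * B)" and ?r = "stage (2 * B) N"
  obtain R H where upto: "dtr_upto ?G B h N (R, H)" and k: "k = ncomputes H"
    using assms(3) by (auto simp: dtr_cost_def)
  have "0 < N" "0 < 2 * B"
    using assms(1,2) by simp_all
  have "N \<le> k"
    using chain_dtr_upto_state[OF \<open>0 < 2 * B\<close> assms(1) upto \<open>0 < N\<close>] k by simp
  moreover have "N + (B + 1) * (\<Sum>i\<le>?r. i) \<le> k + ?r * card (pending (2 * B) ?r N R)"
    using chain_dtr_upto_potential[OF \<open>0 < 2 * B\<close> assms(1) upto] \<open>0 < N\<close> k by simp
  moreover have "card (pending (2 * B) ?r N R) \<le> 2 * B"
    using card_pending_le[OF \<open>0 < 2 * B\<close>] .
  moreover have "?r * (2 * B) < N" "N \<le> ?r * (2 * B) + 2 * B"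
    using stage_eq_iff[OF \<open>0 < 2 * B\<close> \<open>0 < N\<close>, of ?r] by simp_all
  ultimately show ?thesis
    using assms(2) by (intro quadratic_cost_bound)
qed

lemma chain_dtr_cost_ratio:
  assumes "3 \<le> B" and "B \<le> N" and "dtr_cost (chain_net N (2 * B)) B h k"
  shows "1/22 * (real N / real B) * real (opt_static (chain_net N (2 * B)) B) \<le> real k"
proof -
  have "real N * real (opt_static (chain_net N (2 * B)) B) \<le> real N * real N"
    using opt_static_chain_net_le[of "2 * B" B N] assms(1,2) by (intro mult_left_mono) simp_all
  also have "\<dots> \<le> real (22 * B * k)"
    using chain_dtr_cost_lower_bound[OF _ assms(2,3)] assms(1) by (simp flip: of_nat_mult)
  finally show ?thesis
    using assms(1) by (simp add: field_simps)
qed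

theorem theorem2:
  shows "\<exists>c::real > 0. \<exists>B0::nat. \<forall>(h::heuristic) (N::nat) (B::nat).
     valid_heuristic h \<longrightarrow> B0 \<le> B \<longrightarrow> B \<le> N \<longrightarrow>
     (\<exists>G. wf_network G \<and> net_size G = N
        \<and> (\<exists>s. valid_static G B s)
        \<and> (\<exists>k. dtr_cost G B h k)
        \<and> (\<forall>k. dtr_cost G B h k \<longrightarrow>
              real k \<ge> c * (real N / real B) * real (opt_static G B)))"
proof (intro exI[of _ "1/22 :: real"] conjI exI[of _ "3 :: nat"] allI impI, goal_cases)
  case (2 h N B)
  then have pos: "0 < 2 * B" "0 < N"
    by simp_all
  obtain s where "dtr_upto (chain_net N (2 * B)) B h N s"
    using chain_dtr_upto_exists[OF _ _ pos(1)] 2 by blast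
  then have "\<exists>k. dtr_cost (chain_net N (2 * B)) B h k"
    by (cases s) (auto simp: dtr_cost_def)
  with 2 show ?case
    using wf_chain_net[OF pos(1)] valid_chain_schedule[OF pos(1) _ pos(2)] chain_dtr_cost_ratio
    by (intro exI[of _ "chain_net N (2 * B)"]) auto
qed simp

end
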